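(* Let $\mathbf{w}\in\Sigma^\omega$ be an infinite word with appearance constant $\mathbf{A}_\mathbf{w}<\infty$. Then $\mathbf{w}[0..n-1]$ has a string attractor of size $O(\mathbf{A}_\mathbf{w}\log n)$ (with an absolute implied constant).
   Context: $\Sigma$ is a finite alphabet; words are indexed from $0$. The appearance constant $\mathbf{A}_\mathbf{w}$ is the least constant $C$ (if any) such that for every $m\ge1$, every length-$m$ factor of $\mathbf{w}$ has an occurrence in the prefix of $\mathbf{w}$ of length at most $Cm$. A string attractor of a finite word $x=x[0..n-1]$ is a set $S\subseteq\{0,\ldots,n-1\}$ such that every nonempty factor of $x$ has an occurrence $x[p..q]$ with $p\le i\le q$ for some $i\in S$. *)

theory Defs
  imports Complex_Main
begin

text \<open>Infinite words are functions nat => 'a (indexed from 0); the alphabet is finite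
  when the range of the word is finite.\<close>

definition appearance_bound :: "(nat \<Rightarrow> 'a) \<Rightarrow> real \<Rightarrow> bool" where
  "appearance_bound w C \<longleftrightarrow>
     (\<forall>m\<ge>1. \<forall>i. \<exists>j. real (j + m) \<le> C * real m \<and> (\<forall>k<m. w (j + k) = w (i + k)))"

definition has_finite_appearance_constant :: "(nat \<Rightarrow> 'a) \<Rightarrow> bool" where
  "has_finite_appearance_constant w \<longleftrightarrow> (\<exists>C. appearance_bound w C)"

definition appearance_constant :: "(nat \<Rightarrow> 'a) \<Rightarrow> real" where
  "appearance_constant w = Inf {C. appearance_bound w C}"

definition string_attractor :: "'a list \<Rightarrow> nat set \<Rightarrow> bool" where
  "string_attractor x S \<longleftrightarrow> S \<subseteq> {..<length x} \<and>
     (\<forall>p q. p \<le> q \<and> q < length x \<longrightarrow>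
        (\<exists>p'. p' + (q - p) < length x \<and>
              (\<forall>k\<le>q - p. x ! (p' + k) = x ! (p + k)) \<and>
              (\<exists>i\<in>S. p' \<le> i \<and> i \<le> p' + (q - p))))"

end

theory Submission
  imports Defs
begin

text \<open>Let A be an admissible appearance constant. Take as attractor the points t 2^k < n with
  2^k <= n and t < 2A. Every factor x[p..q] of length m, with 2^k <= m < 2^(k+1), has an
  occurrence x[j..j+m-1] with j <= p and j + m <= A m; that window has length at least 2^k, so it
  contains a multiple t 2^k, and t 2^k < A m < 2A 2^k. There are O(log n) levels k and at most
  3A multipliers t per level.\<close>

lemma appearance_bound_ge_one:
  assumes "appearance_bound w C"
  shows "1 \<le> C"
proof -
  from assms obtain j where "real (j + 1) \<le> C * real (1::nat)"
    unfolding appearance_bound_def by blast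
  then show ?thesis by simp
qed

text \<open>The least occurrence of each factor gives a lower bound for every admissible constant,
  hence for their infimum.\<close>
lemma appearance_bound_appearance_constant:
  fixes w :: "nat \<Rightarrow> 'a"
  assumes "has_finite_appearance_constant w"
  shows "appearance_bound w (appearance_constant w)"
  unfolding appearance_bound_def
proof (intro allI impI)
  fix m i :: nat
  assume "1 \<le> m"
  let ?occ = "\<lambda>j. \<forall>k<m. w (j + k) = w (i + k)"
  define j0 where "j0 = (LEAST j. ?occ j)"
  have j0_occ: "?occ j0"
    unfolding j0_def by (rule LeastI[of _ i]) simp
  have "real (j0 + m) / real m \<le> appearance_constant w"
    unfolding appearance_constant_def
  proof (rule cInf_greatest)
    show "{C. appearance_bound w C} \<noteq> {}"
      using assms unfolding has_finite_appearance_constant_def by blast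
  next
    fix C
    assume "C \<in> {C. appearance_bound w C}"
    then obtain j where j: "real (j + m) \<le> C * real m" "?occ j"
      using \<open>1 \<le> m\<close> unfolding appearance_bound_def by blast
    have "j0 \<le> j"
      unfolding j0_def using j(2) by (rule Least_le)
    then have "real (j0 + m) \<le> C * real m"
      using j(1) by simp
    then show "real (j0 + m) / real m \<le> C"
      using \<open>1 \<le> m\<close> by (simp add: divide_le_eq)
  qed
  then have "real (j0 + m) \<le> appearance_constant w * real m"
    using \<open>1 \<le> m\<close> by (simp add: divide_le_eq)
  then show "\<exists>j. real (j + m) \<le> appearance_constant w * real m \<and> ?occ j"
    using j0_occ by blast
qed

text \<open>The factor itself is an occurrence, so the witness may be taken no later than it.\<close>
lemma appearance_bound_occurrence_le:
  assumes "appearance_bound w C" "1 \<le> m"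
  obtains j where "j \<le> i" "real (j + m) \<le> C * real m" "\<forall>k<m. w (j + k) = w (i + k)"
proof -
  obtain j where j: "real (j + m) \<le> C * real m" "\<forall>k<m. w (j + k) = w (i + k)"
    using assms unfolding appearance_bound_def by blast
  show ?thesis
  proof (cases "j \<le> i")
    case True
    then show ?thesis using j that by blast
  next
    case False
    then have "real (i + m) \<le> C * real m"
      using j(1) by simp
    then show ?thesis using that by blast
  qed
qed

lemma ex_multiple_in_interval:
  fixes j d :: nat
  assumes "0 < d"
  shows "\<exists>t. j \<le> t * d \<and> t * d < j + d"
proof -
  define t where "t = (j + d - 1) div d"
  have "t * d + (j + d - 1) mod d = j + d - 1"
    unfolding t_def by (rule div_mult_mod_eq)
  moreover have "(j + d - 1) mod d < d"
    using assms by simp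
  ultimately show ?thesis
    using assms by (intro exI[of _ t]) linarith
qed

definition dyadic_attractor :: "real \<Rightarrow> nat \<Rightarrow> nat set" where
  "dyadic_attractor A n = (\<Union>k\<in>{k. 2 ^ k \<le> n}. (\<lambda>t. t * 2 ^ k) ` {t. real t < 2 * A}) \<inter> {..<n}"

lemma string_attractor_dyadic_attractor:
  assumes "appearance_bound w A"
  shows "string_attractor (map w [0..<n]) (dyadic_attractor A n)"
  unfolding string_attractor_def
proof (intro conjI allI impI)
  show "dyadic_attractor A n \<subseteq> {..<length (map w [0..<n])}"
    unfolding dyadic_attractor_def by auto
next
  fix p q
  assume pq: "p \<le> q \<and> q < length (map w [0..<n])"
  define m where "m = q - p + 1"
  have "1 \<le> m" "p + m \<le> n"
    using pq unfolding m_def by auto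
  obtain j where j: "j \<le> p" "real (j + m) \<le> A * real m" "\<forall>k<m. w (j + k) = w (p + k)"
    using appearance_bound_occurrence_le[OF assms \<open>1 \<le> m\<close>] by blast
  obtain k where k: "2 ^ k \<le> m" "m < 2 ^ (k + 1)"
    using ex_power_ivl1[of 2 m] \<open>1 \<le> m\<close> by auto
  obtain t where t: "j \<le> t * 2 ^ k" "t * 2 ^ k < j + 2 ^ k"
    using ex_multiple_in_interval[of "2 ^ k" j] by auto
  have "t * 2 ^ k < j + m"
    using t(2) k(1) by linarith
  then have "real (t * 2 ^ k) < real (j + m)"
    by (simp only: of_nat_less_iff)
  also have "\<dots> \<le> A * real m"
    by (rule j(2))
  also have "\<dots> < A * real (2 ^ (k + 1))"
  proof -
    have "real m < real (2 ^ (k + 1))"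
      using k(2) by (simp only: of_nat_less_iff)
    then show ?thesis
      using appearance_bound_ge_one[OF assms] by (intro mult_strict_left_mono) auto
  qed
  also have "\<dots> = 2 * A * 2 ^ k"
    by simp
  finally have "real t < 2 * A"
    by simp
  moreover have "2 ^ k \<le> n" "t * 2 ^ k < n"
    using t(2) k(1) j(1) \<open>p + m \<le> n\<close> by linarith+
  ultimately have "t * 2 ^ k \<in> dyadic_attractor A n"
    unfolding dyadic_attractor_def by blast
  moreover have "\<forall>i\<le>q - p. map w [0..<n] ! (j + i) = map w [0..<n] ! (p + i)"
    using j(1,3) \<open>p + m \<le> n\<close> unfolding m_def by auto
  ultimately show "\<exists>p'. p' + (q - p) < length (map w [0..<n]) \<and>
      (\<forall>i\<le>q - p. map w [0..<n] ! (p' + i) = map w [0..<n] ! (p + i)) \<and>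
      (\<exists>s\<in>dyadic_attractor A n. p' \<le> s \<and> s \<le> p' + (q - p))"
    using t j(1) k(1) \<open>p + m \<le> n\<close> unfolding m_def by (intro exI[of _ j]) auto
qed

lemma nat_less_real_eq_lessThan: "{t::nat. real t < x} = {..<nat \<lceil>x\<rceil>}"
  by (auto simp: less_ceiling_iff zless_nat_eq_int_zless)

lemma card_nat_less_real_le:
  assumes "0 \<le> x"
  shows "real (card {t::nat. real t < x}) \<le> x + 1"
  using assms by (simp add: nat_less_real_eq_lessThan)

lemma card_powers_of_two_le:
  fixes n :: nat
  assumes "1 \<le> n"
  shows "real (card {k::nat. 2 ^ k \<le> n}) \<le> log 2 n + 1"
proof -
  have "{k::nat. 2 ^ k \<le> n} \<subseteq> {..nat \<lfloor>log 2 n\<rfloor>}"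
  proof
    fix k :: nat
    assume "k \<in> {k. 2 ^ k \<le> n}"
    then have "real k \<le> log 2 n"
      by (simp add: le_log2_of_power)
    then show "k \<in> {..nat \<lfloor>log 2 n\<rfloor>}"
      by (simp add: le_nat_iff le_floor_iff)
  qed
  then have "card {k::nat. 2 ^ k \<le> n} \<le> nat \<lfloor>log 2 n\<rfloor> + 1"
    using card_mono[of "{..nat \<lfloor>log 2 n\<rfloor>}"] by fastforce
  moreover have "0 \<le> log 2 n"
    using assms by simp
  ultimately show ?thesis
    by linarith
qed

lemma ln_2_ge_half: "1 / 2 \<le> ln (2::real)"
  using ln_le_minus_one[of "1 / 2 :: real"] by (simp add: ln_div)

lemma card_dyadic_attractor_le:
  assumes "1 \<le> A" "2 \<le> n"
  shows "real (card (dyadic_attractor A n)) \<le> 12 * A * ln n"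
proof -
  let ?levels = "{k::nat. 2 ^ k \<le> n}" and ?multipliers = "{t::nat. real t < 2 * A}"
  have "?levels \<subseteq> {..<n}"
    by (auto dest: order.strict_trans2[OF less_exp])
  then have "finite ?levels"
    by (rule finite_subset) simp
  have "finite ?multipliers"
    by (simp add: nat_less_real_eq_lessThan)
  have "card (dyadic_attractor A n) \<le> card (\<Union>k\<in>?levels. (\<lambda>t. t * 2 ^ k) ` ?multipliers)"
    unfolding dyadic_attractor_def
    using \<open>finite ?levels\<close> \<open>finite ?multipliers\<close> by (intro card_mono) auto
  also have "\<dots> \<le> (\<Sum>k\<in>?levels. card ((\<lambda>t. t * 2 ^ k) ` ?multipliers))"
    using \<open>finite ?levels\<close> by (rule card_UN_le)
  also have "\<dots> \<le> (\<Sum>k\<in>?levels. card ?multipliers)"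
    using \<open>finite ?multipliers\<close> by (intro sum_mono card_image_le)
  finally have "real (card (dyadic_attractor A n)) \<le> real (card ?levels) * real (card ?multipliers)"
    by (simp flip: of_nat_mult)
  also have "\<dots> \<le> (4 * ln n) * (3 * A)"
  proof (rule mult_mono)
    have "1 \<le> log 2 n"
      using le_log2_of_power[of 1 n] assms(2) by simp
    moreover have "real (card ?levels) \<le> log 2 n + 1"
      using card_powers_of_two_le[of n] assms(2) by simp
    moreover have "log 2 n \<le> 2 * ln n"
    proof -
      have "ln n / ln 2 \<le> ln n / (1 / 2)"
        using ln_2_ge_half assms(2) by (intro divide_left_mono) simp_all
      then show ?thesis
        by (simp add: log_def)
    qed
    ultimately show "real (card ?levels) \<le> 4 * ln n"
      by linarith
    show "real (card ?multipliers) \<le> 3 * A"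
      using card_nat_less_real_le[of "2 * A"] assms(1) by simp
  qed (use assms in simp_all)
  also have "\<dots> = 12 * A * ln n"
    by simp
  finally show ?thesis .
qed

theorem theorem15:
  shows "\<exists>K::real. \<forall>(w::nat \<Rightarrow> nat) (n::nat).
           finite (range w) \<and> has_finite_appearance_constant w \<and> n \<ge> 2 \<longrightarrow>
           (\<exists>S. string_attractor (map w [0..<n]) S \<and>
                real (card S) \<le> K * appearance_constant w * ln (real n))"
proof (intro exI[of _ 12] allI impI)
  fix w :: "nat \<Rightarrow> nat" and n :: nat
  assume "finite (range w) \<and> has_finite_appearance_constant w \<and> n \<ge> 2"
  then have bound: "appearance_bound w (appearance_constant w)" and "2 \<le> n"
    using appearance_bound_appearance_constant by auto
  show "\<exists>S. string_attractor (map w [0..<n]) S \<and>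
      real (card S) \<le> 12 * appearance_constant w * ln (real n)"
    using string_attractor_dyadic_attractor[OF bound]
      card_dyadic_attractor_le[OF appearance_bound_ge_one[OF bound] \<open>2 \<le> n\<close>]
    by blast
qed

end
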